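(* For every formula $A$ of $\mathrm{SN}$: $A$ is true at both worlds $1$ and $2$ of every $\mathrm{SN}$-model if and only if $\mathrm{SN}\vdash A$.
   Context: Formulas of $\mathrm{SN}$ are built from propositional atoms $p$, constants $\top,\bot$ and a propositional constant $t$, using $\neg,\wedge,\vee,\to$ and a unary connective $N$ (applicable to any formula, iterable). Proof system: $\mathrm{SN}\vdash A$ is generated by all classical tautologies; axioms (K) $N(A\wedge B)\leftrightarrow NA\vee NB$; (F) $\neg NA\leftrightarrow N\neg A$; (C) $A\to NNA$; (A) $t\to(p\to N\neg p)$ for atoms $p$; (T) $t\leftrightarrow Nt$; rules modus ponens and (N): from $A$ infer $N\neg A$. Semantics: an $\mathrm{SN}$-model is $M=(\{1,2\},v)$ where $v$ assigns to each atom $p$ a subset $v(p)\subseteq\{1,2\}$ such that $1\in v(p)$ implies $2\in v(p)$. Truth at $m\in\{1,2\}$: $m\vDash p$ iff $m\in v(p)$; $m\vDash\top$; $m\nvDash\bot$; $m\vDash t$ iff $m=1$; classical clauses for $\neg,\wedge,\vee,\to$ at each world; $1\vDash NA$ iff $2\nvDash A$, and $2\vDash NA$ iff $1\nvDash A$. *)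

theory Defs
  imports Main
begin

datatype 'a fm = Atom 'a | Top | Bot | TT | Neg "'a fm" | Conj "'a fm" "'a fm"
  | Disj "'a fm" "'a fm" | Imp "'a fm" "'a fm" | N "'a fm"

definition Iff :: "'a fm \<Rightarrow> 'a fm \<Rightarrow> 'a fm" where
  "Iff A B = Conj (Imp A B) (Imp B A)"

fun ceval :: "('a fm \<Rightarrow> bool) \<Rightarrow> 'a fm \<Rightarrow> bool" where
  "ceval w (Atom p) = w (Atom p)"
| "ceval w Top = True"
| "ceval w Bot = False"
| "ceval w TT = w TT"
| "ceval w (Neg A) = (\<not> ceval w A)"
| "ceval w (Conj A B) = (ceval w A \<and> ceval w B)"
| "ceval w (Disj A B) = (ceval w A \<or> ceval w B)"
| "ceval w (Imp A B) = (ceval w A \<longrightarrow> ceval w B)"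
| "ceval w (N A) = w (N A)"

definition tautology :: "'a fm \<Rightarrow> bool" where
  "tautology A = (\<forall>w. ceval w A)"

inductive SN_prov :: "'a fm \<Rightarrow> bool" where
  taut: "tautology A \<Longrightarrow> SN_prov A"
| K: "SN_prov (Iff (N (Conj A B)) (Disj (N A) (N B)))"
| F: "SN_prov (Iff (Neg (N A)) (N (Neg A)))"
| C: "SN_prov (Imp A (N (N A)))"
| A: "SN_prov (Imp TT (Imp (Atom p) (N (Neg (Atom p)))))"
| T: "SN_prov (Iff TT (N TT))"
| MP: "SN_prov (Imp A B) \<Longrightarrow> SN_prov A \<Longrightarrow> SN_prov B"
| Nec: "SN_prov A \<Longrightarrow> SN_prov (N (Neg A))"

definition SN_model :: "('a \<Rightarrow> nat set) \<Rightarrow> bool" where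
  "SN_model v = (\<forall>p. v p \<subseteq> {1, 2} \<and> (1 \<in> v p \<longrightarrow> 2 \<in> v p))"

fun sat :: "('a \<Rightarrow> nat set) \<Rightarrow> nat \<Rightarrow> 'a fm \<Rightarrow> bool" where
  "sat v m (Atom p) = (m \<in> v p)"
| "sat v m Top = True"
| "sat v m Bot = False"
| "sat v m TT = (m = 1)"
| "sat v m (Neg A) = (\<not> sat v m A)"
| "sat v m (Conj A B) = (sat v m A \<and> sat v m B)"
| "sat v m (Disj A B) = (sat v m A \<or> sat v m B)"
| "sat v m (Imp A B) = (sat v m A \<longrightarrow> sat v m B)"
| "sat v m (N A) = (if m = 1 then \<not> sat v 2 A else \<not> sat v 1 A)"

end

theory Submission
  imports Defs
begin

(* The axioms K, F, C and T let N be pushed down to negated atoms: every A is provably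
   equivalent to a formula nf A whose only modal subformulas have the form N \<not>p.  A classical
   valuation of t, the atoms p and the formulas N \<not>p that satisfies the provable constraints
   t \<longrightarrow> (p \<longrightarrow> N \<not>p) and \<not>t \<longrightarrow> (N \<not>p \<longrightarrow> p) is realised at a world of an SN-model (world 1 iff
   it makes t true).  So if A is valid, nf A is a tautological consequence of finitely many
   provable constraints. *)

lemma ceval_sat_eq: "ceval (sat v m) A = sat v m A"
  by (induction A) auto

lemma SN_sound: "SN_prov A \<Longrightarrow> SN_model v \<Longrightarrow> sat v 1 A \<and> sat v 2 A"
proof (induction A rule: SN_prov.induct)
  case (taut A)
  then show ?case
    using ceval_sat_eq[of v 1 A] ceval_sat_eq[of v 2 A] by (auto simp: tautology_def)
next
  case (A p)
  then show ?case by (auto simp: SN_model_def)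
qed (auto simp: Iff_def)

lemma ceval_Iff [simp]: "ceval w (Iff A B) = (ceval w A \<longleftrightarrow> ceval w B)"
  by (auto simp: Iff_def)

lemma SN_prov_tautological_consequence:
  assumes "\<forall>B\<in>set Bs. SN_prov B" and "\<forall>w. (\<forall>B\<in>set Bs. ceval w B) \<longrightarrow> ceval w C"
  shows "SN_prov C"
  using assms
proof (induction Bs arbitrary: C)
  case Nil
  then show ?case by (auto intro: SN_prov.taut simp: tautology_def)
next
  case (Cons B Bs)
  then have "SN_prov (Imp B C)" by simp
  with Cons.prems show ?case by (auto intro: SN_prov.MP)
qed

lemma SN_prov_consequence: "SN_prov A \<Longrightarrow> (\<And>w. ceval w A \<Longrightarrow> ceval w B) \<Longrightarrow> SN_prov B"
  by (rule SN_prov_tautological_consequence[of "[A]"]) auto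

lemma SN_prov_Conj: "SN_prov A \<Longrightarrow> SN_prov B \<Longrightarrow> SN_prov (Conj A B)"
  by (rule SN_prov_tautological_consequence[of "[A, B]"]) auto

lemma SN_prov_N: "SN_prov (Neg A) \<Longrightarrow> SN_prov (N A)"
  using SN_prov_Conj[OF SN_prov.Nec SN_prov_Conj[OF SN_prov.F[of "Neg A"] SN_prov.F[of A]]]
  by (rule SN_prov_consequence) auto

lemma SN_prov_Neg_N: "SN_prov A \<Longrightarrow> SN_prov (Neg (N A))"
  using SN_prov_Conj[OF SN_prov.Nec SN_prov.F[of A]]
  by (rule SN_prov_consequence) auto

lemma N_antimono: "SN_prov (Imp A B) \<Longrightarrow> SN_prov (Imp (N B) (N A))"
proof -
  assume "SN_prov (Imp A B)"
  then have "SN_prov (Neg (Conj A (Neg B)))" by (rule SN_prov_consequence) simp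
  then have "SN_prov (N (Conj A (Neg B)))" by (rule SN_prov_N)
  from SN_prov_Conj[OF this SN_prov_Conj[OF SN_prov.K[of A "Neg B"] SN_prov.F[of B]]]
  show ?thesis by (rule SN_prov_consequence) auto
qed

lemma N_cong: "SN_prov (Iff A B) \<Longrightarrow> SN_prov (Iff (N A) (N B))"
proof -
  assume AB: "SN_prov (Iff A B)"
  then have "SN_prov (Imp A B)" by (rule SN_prov_consequence) simp
  moreover from AB have "SN_prov (Imp B A)" by (rule SN_prov_consequence) simp
  ultimately have "SN_prov (Conj (Imp (N B) (N A)) (Imp (N A) (N B)))"
    by (intro SN_prov_Conj N_antimono)
  then show ?thesis by (rule SN_prov_consequence) auto
qed

lemma N_N: "SN_prov (Iff (N (N A)) A)"
proof -
  have "SN_prov (Iff (N (Neg (N A))) (N (N (Neg A))))" by (rule N_cong) (rule SN_prov.F)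
  from SN_prov_Conj[OF SN_prov_Conj[OF SN_prov.C[of A] SN_prov.C[of "Neg A"]]
      SN_prov_Conj[OF this SN_prov.F[of "N A"]]]
  show ?thesis by (rule SN_prov_consequence) auto
qed

lemma N_Top: "SN_prov (Iff (N Top) Bot)"
proof -
  have "SN_prov (Neg (N Top))" by (rule SN_prov_Neg_N) (simp add: SN_prov.taut tautology_def)
  then show ?thesis by (rule SN_prov_consequence) auto
qed

lemma N_Bot: "SN_prov (Iff (N Bot) Top)"
proof -
  have "SN_prov (N Bot)" by (rule SN_prov_N) (simp add: SN_prov.taut tautology_def)
  then show ?thesis by (rule SN_prov_consequence) auto
qed

lemma N_Disj: "SN_prov (Iff (N (Disj A B)) (Conj (N A) (N B)))"
proof -
  let ?C = "Conj (Neg A) (Neg B)"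
  have "SN_prov (Iff (N (Disj A B)) (N (Neg ?C)))"
    by (rule N_cong) (simp add: SN_prov.taut tautology_def)
  from SN_prov_Conj[OF this SN_prov_Conj[OF SN_prov.F[of ?C]
      SN_prov_Conj[OF SN_prov.K[of "Neg A" "Neg B"] SN_prov_Conj[OF SN_prov.F[of A] SN_prov.F[of B]]]]]
  show ?thesis by (rule SN_prov_consequence) auto
qed

lemma N_Imp: "SN_prov (Iff (N (Imp A B)) (Conj (Neg (N A)) (N B)))"
proof -
  have "SN_prov (Iff (N (Imp A B)) (N (Disj (Neg A) B)))"
    by (rule N_cong) (simp add: SN_prov.taut tautology_def)
  from SN_prov_Conj[OF this SN_prov_Conj[OF N_Disj[of "Neg A" B] SN_prov.F[of A]]]
  show ?thesis by (rule SN_prov_consequence) auto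
qed

fun nf :: "'a fm \<Rightarrow> 'a fm" and nf_N :: "'a fm \<Rightarrow> 'a fm" where
  "nf (Atom p) = Atom p"
| "nf Top = Top"
| "nf Bot = Bot"
| "nf TT = TT"
| "nf (Neg A) = Neg (nf A)"
| "nf (Conj A B) = Conj (nf A) (nf B)"
| "nf (Disj A B) = Disj (nf A) (nf B)"
| "nf (Imp A B) = Imp (nf A) (nf B)"
| "nf (N A) = nf_N A"
| "nf_N (Atom p) = Neg (N (Neg (Atom p)))"
| "nf_N Top = Bot"
| "nf_N Bot = Top"
| "nf_N TT = TT"
| "nf_N (Neg A) = Neg (nf_N A)"
| "nf_N (Conj A B) = Disj (nf_N A) (nf_N B)"
| "nf_N (Disj A B) = Conj (nf_N A) (nf_N B)"
| "nf_N (Imp A B) = Conj (Neg (nf_N A)) (nf_N B)"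
| "nf_N (N A) = nf A"

lemma SN_prov_Iff_nf: "SN_prov (Iff A (nf A)) \<and> SN_prov (Iff (N A) (nf_N A))"
proof (induction A)
  case (Atom p)
  have "SN_prov (Iff (N (Atom p)) (nf_N (Atom p)))"
    using SN_prov.F[of "Atom p"] by (rule SN_prov_consequence) auto
  then show ?case by (simp add: SN_prov.taut tautology_def)
next
  case TT
  have "SN_prov (Iff (N TT) (nf_N TT))"
    using SN_prov.T by (rule SN_prov_consequence) auto
  then show ?case by (simp add: SN_prov.taut tautology_def)
next
  case (Neg A)
  then have IH: "SN_prov (Iff A (nf A))" "SN_prov (Iff (N A) (nf_N A))" by auto
  have "SN_prov (Iff (Neg A) (nf (Neg A)))"
    using IH(1) by (rule SN_prov_consequence) auto
  moreover have "SN_prov (Iff (N (Neg A)) (nf_N (Neg A)))"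
    using SN_prov_Conj[OF SN_prov.F[of A] IH(2)] by (rule SN_prov_consequence) auto
  ultimately show ?case ..
next
  case (Conj A B)
  then have IH: "SN_prov (Iff A (nf A))" "SN_prov (Iff (N A) (nf_N A))"
    "SN_prov (Iff B (nf B))" "SN_prov (Iff (N B) (nf_N B))" by auto
  have "SN_prov (Iff (Conj A B) (nf (Conj A B)))"
    using SN_prov_Conj[OF IH(1,3)] by (rule SN_prov_consequence) auto
  moreover have "SN_prov (Iff (N (Conj A B)) (nf_N (Conj A B)))"
    using SN_prov_Conj[OF SN_prov.K[of A B] SN_prov_Conj[OF IH(2,4)]]
    by (rule SN_prov_consequence) auto
  ultimately show ?case ..
next
  case (Disj A B)
  then have IH: "SN_prov (Iff A (nf A))" "SN_prov (Iff (N A) (nf_N A))"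
    "SN_prov (Iff B (nf B))" "SN_prov (Iff (N B) (nf_N B))" by auto
  have "SN_prov (Iff (Disj A B) (nf (Disj A B)))"
    using SN_prov_Conj[OF IH(1,3)] by (rule SN_prov_consequence) auto
  moreover have "SN_prov (Iff (N (Disj A B)) (nf_N (Disj A B)))"
    using SN_prov_Conj[OF N_Disj[of A B] SN_prov_Conj[OF IH(2,4)]]
    by (rule SN_prov_consequence) auto
  ultimately show ?case ..
next
  case (Imp A B)
  then have IH: "SN_prov (Iff A (nf A))" "SN_prov (Iff (N A) (nf_N A))"
    "SN_prov (Iff B (nf B))" "SN_prov (Iff (N B) (nf_N B))" by auto
  have "SN_prov (Iff (Imp A B) (nf (Imp A B)))"
    using SN_prov_Conj[OF IH(1,3)] by (rule SN_prov_consequence) auto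
  moreover have "SN_prov (Iff (N (Imp A B)) (nf_N (Imp A B)))"
    using SN_prov_Conj[OF N_Imp[of A B] SN_prov_Conj[OF IH(2,4)]]
    by (rule SN_prov_consequence) auto
  ultimately show ?case ..
next
  case (N A)
  then have IH: "SN_prov (Iff A (nf A))" "SN_prov (Iff (N A) (nf_N A))" by auto
  have "SN_prov (Iff (N (N A)) (nf_N (N A)))"
    using SN_prov_Conj[OF N_N[of A] IH(1)] by (rule SN_prov_consequence) auto
  with IH(2) show ?case by simp
qed (simp_all add: SN_prov.taut tautology_def N_Top N_Bot)

fun atoms :: "'a fm \<Rightarrow> 'a list" where
  "atoms (Atom p) = [p]"
| "atoms Top = []"
| "atoms Bot = []"
| "atoms TT = []"
| "atoms (Neg A) = atoms A"
| "atoms (Conj A B) = atoms A @ atoms B"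
| "atoms (Disj A B) = atoms A @ atoms B"
| "atoms (Imp A B) = atoms A @ atoms B"
| "atoms (N A) = atoms A"

definition atom_constraint :: "'a \<Rightarrow> 'a fm" where
  "atom_constraint p =
     Conj (Imp TT (Imp (Atom p) (N (Neg (Atom p)))))
          (Imp (Neg TT) (Imp (N (Neg (Atom p))) (Atom p)))"

lemma SN_prov_atom_constraint: "SN_prov (atom_constraint p)"
proof -
  let ?A = "Imp TT (Imp (Atom p) (N (Neg (Atom p))))"
  from SN_prov_Conj[OF SN_prov.A SN_prov_Conj[OF SN_prov_Neg_N[OF SN_prov.A[of p]]
      SN_prov_Iff_nf[of ?A, THEN conjunct2]]]
  show ?thesis unfolding atom_constraint_def by (rule SN_prov_consequence) auto
qed

lemma ceval_nf_eq_sat: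
  assumes "w TT = sat v m TT"
    and "\<forall>p\<in>set (atoms A). w (Atom p) = sat v m (Atom p) \<and>
           w (N (Neg (Atom p))) = sat v m (N (Neg (Atom p)))"
  shows "ceval w (nf A) = sat v m (nf A) \<and> ceval w (nf_N A) = sat v m (nf_N A)"
  using assms by (induction A) auto

lemma valuation_realised:
  assumes "\<forall>p\<in>set ps. ceval w (atom_constraint p)"
  obtains v m where "SN_model v" and "m = 1 \<or> m = 2" and "w TT = sat v m TT"
    and "\<forall>p\<in>set ps. w (Atom p) = sat v m (Atom p) \<and>
           w (N (Neg (Atom p))) = sat v m (N (Neg (Atom p)))"
proof
  define m :: nat where "m = (if w TT then 1 else 2)"
  define v where "v p = {k. p \<in> set ps \<and> (k = m \<and> w (Atom p) \<or> k = 3 - m \<and> w (N (Neg (Atom p))))}"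
    for p
  show "SN_model v"
    using assms unfolding SN_model_def v_def m_def by (auto simp: atom_constraint_def)
  show "m = 1 \<or> m = 2" and "w TT = sat v m TT"
    by (auto simp: m_def)
  show "\<forall>p\<in>set ps. w (Atom p) = sat v m (Atom p) \<and>
           w (N (Neg (Atom p))) = sat v m (N (Neg (Atom p)))"
    by (auto simp: v_def m_def)
qed

lemma SN_complete:
  assumes valid: "\<forall>v. SN_model v \<longrightarrow> sat v 1 A \<and> sat v 2 A"
  shows "SN_prov A"
proof -
  have "SN_prov (nf A)"
  proof (rule SN_prov_tautological_consequence[of "map atom_constraint (atoms A)"])
    show "\<forall>B\<in>set (map atom_constraint (atoms A)). SN_prov B"
      by (simp add: SN_prov_atom_constraint)
    show "\<forall>w. (\<forall>B\<in>set (map atom_constraint (atoms A)). ceval w B) \<longrightarrow> ceval w (nf A)"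
    proof (intro allI impI)
      fix w
      assume "\<forall>B\<in>set (map atom_constraint (atoms A)). ceval w B"
      then obtain v m where model: "SN_model v" and m: "m = 1 \<or> m = 2"
        and "w TT = sat v m TT"
        and "\<forall>p\<in>set (atoms A). w (Atom p) = sat v m (Atom p) \<and>
               w (N (Neg (Atom p))) = sat v m (N (Neg (Atom p)))"
        by (auto elim: valuation_realised)
      then have agree: "ceval w (nf A) = sat v m (nf A)"
        using ceval_nf_eq_sat by blast
      have "sat v m A" and "sat v m (Iff A (nf A))"
        using valid SN_sound[OF SN_prov_Iff_nf[THEN conjunct1]] model m by auto
      then show "ceval w (nf A)" using agree by (simp add: Iff_def)
    qed
  qed
  from SN_prov_Conj[OF SN_prov_Iff_nf[of A, THEN conjunct1] this]
  show ?thesis by (rule SN_prov_consequence) auto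
qed

theorem theorem34:
  fixes A :: "'a fm"
  shows "(\<forall>v. SN_model v \<longrightarrow> sat v 1 A \<and> sat v 2 A) \<longleftrightarrow> SN_prov A"
  using SN_complete SN_sound by blast

end
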